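(* For positive integers $k<n$, $$\theta_k(\ell_\infty,\ell_\infty)\le \binom{n}{k}(k+1)^{\frac{k-1}{2}},$$ i.e. every $B\in\mathbb{C}^{n\times n}$ whose columns all have $\ell_\infty$ norm $1$ satisfies $\|C_k(B)\|_\infty\le\binom nk (k+1)^{(k-1)/2}$.
   Context: $C_k(B)$ is the $k$th compound of $B$: the $\binom nk\times\binom nk$ matrix of all $k\times k$ minors $\det B(\alpha|\beta)$, indexed by $k$-subsets $\alpha,\beta$ of $\{1,\ldots,n\}$. For vectors $\|\cdot\|_\infty$ is the max-modulus norm; for matrices it is the induced operator norm (maximum absolute row sum). $\theta_k(\mu,\nu)=\max\{\mu(C_k(B)): B\in\mathbb{C}^{n\times n},\ \nu(\mathrm{col}_i(B))=1\ \forall i\}$, where $\mathrm{col}_i(B)$ is the $i$th column. *)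

theory Defs
  imports Complex_Main "Jordan_Normal_Form.Determinant"
begin

(* k-subsets of the index set {0..<n} (0-based indexing of {1..n}) *)
definition ksubsets :: "nat \<Rightarrow> nat \<Rightarrow> nat set set" where
  "ksubsets n k = {S. S \<subseteq> {0..<n} \<and> card S = k}"

definition minor :: "complex mat \<Rightarrow> nat set \<Rightarrow> nat set \<Rightarrow> complex" where
  "minor B \<alpha> \<beta> = det (mat (card \<alpha>) (card \<beta>)
      (\<lambda>(i, j). B $$ (sorted_list_of_set \<alpha> ! i, sorted_list_of_set \<beta> ! j)))"

(* entry of the k-th compound C_k(B) indexed by k-subsets (alpha, beta) is minor B alpha beta;
   its induced infinity-norm is the maximal absolute row sum *)
definition compound_inf_norm :: "nat \<Rightarrow> complex mat \<Rightarrow> real" where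
  "compound_inf_norm k B =
     Max ((\<lambda>\<alpha>. \<Sum>\<beta>\<in>ksubsets (dim_col B) k. cmod (minor B \<alpha> \<beta>)) ` ksubsets (dim_row B) k)"

definition col_inf_norm :: "complex mat \<Rightarrow> nat \<Rightarrow> real" where
  "col_inf_norm B j = Max ((\<lambda>i. cmod (B $$ (i, j))) ` {0..<dim_row B})"

end

(* Fix a k-subset \<alpha> of rows. For every (k+1)-subset \<gamma> of columns, border the k x (k+1)
   submatrix B(\<alpha>|\<gamma>) by a top row of unimodular phases, chosen so that the Laplace expansion
   along it equals \<Sum>a\<in>\<gamma>. |det B(\<alpha>|\<gamma>-{a})|. All entries of the bordered matrix have modulus
   at most 1, so by Hadamard's inequality this sum is at most (k+1)^((k+1)/2). Every k-subset \<beta>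
   is \<gamma>-{a} for exactly n-k pairs (\<gamma>, a), hence summing over \<gamma> gives
   (n-k) \<Sum>\<beta>. |det B(\<alpha>|\<beta>)| \<le> C(n,k+1) (k+1)^((k+1)/2) = (n-k) C(n,k) (k+1)^((k-1)/2).
   Hadamard's inequality itself comes from Gram-Schmidt: A = L W with L unit lower triangular
   and W with orthogonal rows no longer than those of A, and |det W|^2 = det (W W^H). *)

theory Submission
  imports Defs "HOL-Analysis.L2_Norm"
begin

interpretation cnj_hom: comm_ring_hom cnj
  by unfold_locales auto

text \<open>Vectors of length \<open>m\<close> are functions \<open>nat \<Rightarrow> complex\<close> of which only the values below \<open>m\<close> matter.\<close>

definition cinner :: "nat \<Rightarrow> (nat \<Rightarrow> complex) \<Rightarrow> (nat \<Rightarrow> complex) \<Rightarrow> complex" where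
  "cinner m u v = (\<Sum>j<m. u j * cnj (v j))"

definition sqnorm :: "nat \<Rightarrow> (nat \<Rightarrow> complex) \<Rightarrow> real" where
  "sqnorm m u = (\<Sum>j<m. (cmod (u j))\<^sup>2)"

lemma cinner_commute: "cinner m u v = cnj (cinner m v u)"
  unfolding cinner_def by (simp add: mult.commute)

lemma cinner_diff_left: "cinner m (\<lambda>j. u j - v j) w = cinner m u w - cinner m v w"
  unfolding cinner_def by (simp add: algebra_simps sum_subtractf)

lemma cinner_sum_left: "cinner m (\<lambda>j. \<Sum>l\<in>L. c l * f l j) w = (\<Sum>l\<in>L. c l * cinner m (f l) w)"
  unfolding cinner_def by (simp add: sum_distrib_right sum_distrib_left mult.assoc sum.swap[of _ L])

lemma cinner_self: "cinner m u u = of_real (sqnorm m u)"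
  unfolding cinner_def sqnorm_def of_real_sum by (simp only: complex_norm_square)

lemma sqnorm_nonneg: "0 \<le> sqnorm m u"
  unfolding sqnorm_def by (simp add: sum_nonneg)

lemma cinner_Cauchy_Schwarz: "(cmod (cinner m u v))\<^sup>2 \<le> sqnorm m u * sqnorm m v"
proof -
  let ?L2 = "\<lambda>w. L2_set (\<lambda>j. cmod (w j)) {..<m}"
  have "cmod (cinner m u v) \<le> (\<Sum>j<m. \<bar>cmod (u j)\<bar> * \<bar>cmod (v j)\<bar>)"
    unfolding cinner_def by (rule order_trans[OF norm_sum]) (simp add: norm_mult)
  also have "\<dots> \<le> ?L2 u * ?L2 v"
    by (rule L2_set_mult_ineq)
  finally have "(cmod (cinner m u v))\<^sup>2 \<le> (?L2 u * ?L2 v)\<^sup>2"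
    by (simp add: power_mono)
  also have "\<dots> = sqnorm m u * sqnorm m v"
    by (simp add: power_mult_distrib L2_set_def sqnorm_def sum_nonneg)
  finally show ?thesis .
qed

definition proj_coeff :: "nat \<Rightarrow> (nat \<Rightarrow> complex) \<Rightarrow> (nat \<Rightarrow> complex) \<Rightarrow> complex" where
  "proj_coeff m v w = cinner m v w / cinner m w w"

text \<open>For vanishing \<open>w\<close> the coefficient is \<open>0\<close> by division by zero, and the identity still holds.\<close>

lemma proj_coeff_mult_cinner_self: "proj_coeff m v w * cinner m w w = cinner m v w"
proof (cases "cinner m w w = 0")
  case True
  then have "(cmod (cinner m v w))\<^sup>2 \<le> 0"
    using cinner_Cauchy_Schwarz[of m v w] by (simp add: cinner_self)
  with True show ?thesis by simp
qed (simp add: proj_coeff_def)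

function gram_schmidt_row :: "nat \<Rightarrow> (nat \<Rightarrow> nat \<Rightarrow> complex) \<Rightarrow> nat \<Rightarrow> nat \<Rightarrow> complex" where
  "gram_schmidt_row m R i = (\<lambda>j. R i j -
     (\<Sum>l<i. proj_coeff m (R i) (gram_schmidt_row m R l) * gram_schmidt_row m R l j))"
  by auto
termination by (relation "measure (\<lambda>(m, R, i). i)") auto

declare gram_schmidt_row.simps [simp del]

lemma gram_schmidt_row_orthogonal_less:
  "l < i \<Longrightarrow> cinner m (gram_schmidt_row m R i) (gram_schmidt_row m R l) = 0"
proof (induction i arbitrary: l rule: less_induct)
  case (less i)
  let ?G = "gram_schmidt_row m R"
  let ?\<mu> = "\<lambda>l. proj_coeff m (R i) (?G l)"
  have orth: "cinner m (?G l') (?G l) = 0" if "l' < i" "l' \<noteq> l" for l'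
  proof (cases "l' < l")
    case True
    then show ?thesis
      using less.IH[of l l'] less.prems by (subst cinner_commute) simp
  qed (use less.IH[of l' l] that in auto)
  have "cinner m (?G i) (?G l) = cinner m (R i) (?G l) - (\<Sum>l'<i. ?\<mu> l' * cinner m (?G l') (?G l))"
    by (subst gram_schmidt_row.simps) (simp add: cinner_diff_left cinner_sum_left)
  also have "(\<Sum>l'<i. ?\<mu> l' * cinner m (?G l') (?G l)) = ?\<mu> l * cinner m (?G l) (?G l)"
    using less.prems by (subst sum.remove[of _ l]) (auto simp: orth intro!: sum.neutral)
  finally show ?case
    by (simp add: proj_coeff_mult_cinner_self)
qed

lemma gram_schmidt_row_orthogonal:
  assumes "l \<noteq> i"
  shows "cinner m (gram_schmidt_row m R i) (gram_schmidt_row m R l) = 0"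
proof (cases "l < i")
  case False
  with assms show ?thesis
    using gram_schmidt_row_orthogonal_less[of i l m R] by (subst cinner_commute) simp
qed (rule gram_schmidt_row_orthogonal_less)

lemma sqnorm_gram_schmidt_row_le: "sqnorm m (gram_schmidt_row m R i) \<le> sqnorm m (R i)"
proof -
  let ?G = "gram_schmidt_row m R"
  let ?s = "sqnorm m (?G i)"
  have "cinner m (?G i) (?G i) = cinner m (R i) (?G i)"
    by (subst (1) gram_schmidt_row.simps)
      (simp add: cinner_diff_left cinner_sum_left gram_schmidt_row_orthogonal)
  then have "?s = cmod (cinner m (R i) (?G i))"
    using sqnorm_nonneg[of m "?G i"] by (metis cinner_self norm_of_real abs_of_nonneg)
  then have "?s\<^sup>2 = (cmod (cinner m (R i) (?G i)))\<^sup>2"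
    by simp
  also have "\<dots> \<le> sqnorm m (R i) * ?s"
    by (rule cinner_Cauchy_Schwarz)
  finally show ?thesis
    using sqnorm_nonneg[of m "?G i"] by (cases "?s = 0") (auto simp: power2_eq_square sqnorm_nonneg)
qed

lemma det_gram_schmidt_rows:
  assumes A: "A \<in> carrier_mat m m"
  shows "det A = det (mat m m (\<lambda>(i, j). gram_schmidt_row m (\<lambda>i j. A $$ (i, j)) i j))"
    (is "_ = det ?W")
proof -
  let ?G = "gram_schmidt_row m (\<lambda>i j. A $$ (i, j))"
  define L where "L = mat m m (\<lambda>(i, l). if l < i then proj_coeff m (\<lambda>j. A $$ (i, j)) (?G l)
    else if l = i then 1 else 0)"
  have L: "L \<in> carrier_mat m m" and W: "?W \<in> carrier_mat m m"
    unfolding L_def by auto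
  have "A = L * ?W"
  proof (rule eq_matI)
    fix i j assume "i < dim_row (L * ?W)" "j < dim_col (L * ?W)"
    then have i: "i < m" and j: "j < m"
      using L W by auto
    have "(L * ?W) $$ (i, j) = (\<Sum>l\<in>{0..<m}. L $$ (i, l) * ?G l j)"
      using i j by (simp add: L_def scalar_prod_def)
    also have "\<dots> = (\<Sum>l\<in>{0..<Suc i}. L $$ (i, l) * ?G l j)"
      using i by (intro sum.mono_neutral_right) (auto simp: L_def)
    also have "\<dots> = (\<Sum>l<i. proj_coeff m (\<lambda>j. A $$ (i, j)) (?G l) * ?G l j) + ?G i j"
      using i by (simp add: L_def lessThan_atLeast0)
    also have "\<dots> = A $$ (i, j)"
      by (subst (2) gram_schmidt_row.simps) simp
    finally show "A $$ (i, j) = (L * ?W) $$ (i, j)" ..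
  qed (use A L W in auto)
  moreover have "det L = 1"
    using det_lower_triangular[OF _ L] L by (auto simp: L_def prod_list_diag_prod)
  ultimately show ?thesis
    using det_mult[OF L W] by simp
qed

lemma cmod_det_sq_orthogonal_rows:
  assumes orth: "\<And>i l. i < m \<Longrightarrow> l < m \<Longrightarrow> i \<noteq> l \<Longrightarrow> cinner m (w i) (w l) = 0"
  shows "(cmod (det (mat m m (\<lambda>(i, j). w i j))))\<^sup>2 = (\<Prod>i<m. sqnorm m (w i))"
proof -
  let ?W = "mat m m (\<lambda>(i, j). w i j)"
  let ?V = "transpose_mat (map_mat cnj ?W)"
  have W: "?W \<in> carrier_mat m m" and V: "?V \<in> carrier_mat m m"
    by auto
  have gram: "?W * ?V = mat m m (\<lambda>(i, l). cinner m (w i) (w l))"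
    by (intro eq_matI) (auto simp: scalar_prod_def cinner_def lessThan_atLeast0)
  have "of_real ((cmod (det ?W))\<^sup>2) = det ?W * cnj (det ?W)"
    by (rule complex_norm_square)
  also have "\<dots> = det (?W * ?V)"
    using det_transpose[of "map_mat cnj ?W" m] by (simp add: det_mult[OF W V] cnj_hom.hom_det)
  also have "\<dots> = (\<Prod>i<m. cinner m (w i) (w i))"
    unfolding gram
    by (subst det_lower_triangular[where n = m]) (auto simp: orth prod_list_diag_prod lessThan_atLeast0)
  also have "\<dots> = of_real (\<Prod>i<m. sqnorm m (w i))"
    by (simp add: cinner_self)
  finally show ?thesis
    by (simp only: of_real_eq_iff)
qed

theorem Hadamard_inequality:
  assumes A: "A \<in> carrier_mat m m"
  shows "(cmod (det A))\<^sup>2 \<le> (\<Prod>i<m. sqnorm m (\<lambda>j. A $$ (i, j)))"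
proof -
  let ?G = "gram_schmidt_row m (\<lambda>i j. A $$ (i, j))"
  have "(cmod (det A))\<^sup>2 = (\<Prod>i<m. sqnorm m (?G i))"
    unfolding det_gram_schmidt_rows[OF A]
    by (rule cmod_det_sq_orthogonal_rows) (simp add: gram_schmidt_row_orthogonal)
  also have "\<dots> \<le> (\<Prod>i<m. sqnorm m (\<lambda>j. A $$ (i, j)))"
    by (intro prod_mono conjI sqnorm_nonneg sqnorm_gram_schmidt_row_le)
  finally show ?thesis .
qed

lemma cmod_det_sq_le_if_entries_le_1:
  assumes A: "A \<in> carrier_mat m m"
    and entries: "\<And>i j. i < m \<Longrightarrow> j < m \<Longrightarrow> cmod (A $$ (i, j)) \<le> 1"
  shows "(cmod (det A))\<^sup>2 \<le> real m ^ m"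
proof -
  have "sqnorm m (\<lambda>j. A $$ (i, j)) \<le> real m" if "i < m" for i
    using sum_mono[of "{..<m}" "\<lambda>j. (cmod (A $$ (i, j)))\<^sup>2" "\<lambda>_. 1"]
    by (simp add: sqnorm_def entries that power_le_one)
  then have "(\<Prod>i<m. sqnorm m (\<lambda>j. A $$ (i, j))) \<le> (\<Prod>i<m. real m)"
    by (intro prod_mono) (simp add: sqnorm_nonneg)
  with Hadamard_inequality[OF A] show ?thesis
    by simp
qed

lemma sorted_list_of_set_remove_nth:
  assumes G: "finite G" and j: "j < card G" and i: "i < card G - 1"
  shows "sorted_list_of_set (G - {sorted_list_of_set G ! j}) ! i
    = sorted_list_of_set G ! insert_index j i"
proof -
  let ?s = "sorted_list_of_set G"
  have len: "length ?s = card G" and dist: "distinct ?s"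
    using G by auto
  have split: "?s = take j ?s @ ?s ! j # drop (Suc j) ?s"
    using j len by (simp add: id_take_nth_drop)
  then have "?s ! j \<notin> set (take j ?s)"
    using dist by (metis distinct_append distinct.simps(2) disjoint_iff list.set_intros(1))
  then have "remove1 (?s ! j) ?s = take j ?s @ drop (Suc j) ?s"
    by (subst split) (simp add: remove1_append)
  then have "sorted_list_of_set (G - {?s ! j}) = take j ?s @ drop (Suc j) ?s"
    using G by (simp add: sorted_list_of_set_remove)
  then show ?thesis
    using i j len by (simp add: nth_append insert_index_def)
qed

lemma det_bordered_minor:
  fixes B :: "complex mat" and x :: "nat \<Rightarrow> complex"
  assumes \<gamma>: "finite \<gamma>" and card: "card \<gamma> = Suc (card \<alpha>)"
  shows "det (mat (card \<gamma>) (card \<gamma>) (\<lambda>(i, j). if i = 0 then x j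
      else B $$ (sorted_list_of_set \<alpha> ! (i - 1), sorted_list_of_set \<gamma> ! j)))
    = (\<Sum>j<card \<gamma>. (-1) ^ j * x j * minor B \<alpha> (\<gamma> - {sorted_list_of_set \<gamma> ! j}))"
    (is "det ?M = _")
proof -
  let ?s = "sorted_list_of_set \<gamma>"
  have M: "?M \<in> carrier_mat (card \<gamma>) (card \<gamma>)"
    by simp
  have delete: "det (mat_delete ?M 0 j) = minor B \<alpha> (\<gamma> - {?s ! j})" if j: "j < card \<gamma>" for j
  proof -
    have "?s ! j \<in> \<gamma>"
      using j \<gamma> by (metis length_sorted_list_of_set nth_mem set_sorted_list_of_set)
    then have card_del: "card (\<gamma> - {?s ! j}) = card \<alpha>"
      using \<gamma> card by simp
    show ?thesis
      unfolding minor_def card_del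
      by (intro arg_cong[where f = det] eq_matI)
        (use j card \<gamma> in \<open>auto simp: mat_delete_def sorted_list_of_set_remove_nth insert_index_def\<close>)
  qed
  have "det ?M = (\<Sum>j<card \<gamma>. ?M $$ (0, j) * cofactor ?M 0 j)"
    using card by (intro laplace_expansion_row[OF M]) simp
  also have "\<dots> = (\<Sum>j<card \<gamma>. (-1) ^ j * x j * minor B \<alpha> (\<gamma> - {?s ! j}))"
    by (intro sum.cong) (auto simp: cofactor_def delete)
  finally show ?thesis .
qed

lemma cnj_mult_self_div_cmod: "cnj z * z / of_real (cmod z) = of_real (cmod z)"
proof (cases "z = 0")
  case False
  then show ?thesis
    using complex_norm_square[of z] by (simp add: field_simps power2_eq_square)
qed simp

text \<open>Bordering \<open>B(\<alpha>|\<gamma>)\<close> by a row of phases that turns the Laplace expansion along it into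
  a sum of moduli; all entries of the bordered matrix are then bounded by \<open>1\<close>.\<close>

lemma sum_cmod_minors_remove_le:
  fixes B :: "complex mat"
  assumes entries: "\<And>i j. i < dim_row B \<Longrightarrow> j < dim_col B \<Longrightarrow> cmod (B $$ (i, j)) \<le> 1"
    and \<alpha>: "\<alpha> \<subseteq> {0..<dim_row B}" and \<gamma>: "\<gamma> \<subseteq> {0..<dim_col B}"
    and card: "card \<gamma> = Suc (card \<alpha>)"
  shows "(\<Sum>a\<in>\<gamma>. cmod (minor B \<alpha> (\<gamma> - {a})))\<^sup>2 \<le> real (card \<gamma>) ^ card \<gamma>"
proof -
  let ?s = "sorted_list_of_set \<gamma>" and ?r = "sorted_list_of_set \<alpha>"
  have fin: "finite \<alpha>" "finite \<gamma>"
    using \<alpha> \<gamma> finite_subset by auto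
  define d where "d j = minor B \<alpha> (\<gamma> - {?s ! j})" for j
  define x where "x j = (-1) ^ j * (cnj (d j) / of_real (cmod (d j)))" for j
  define M where "M = mat (card \<gamma>) (card \<gamma>) (\<lambda>(i, j). if i = 0 then x j
    else B $$ (?r ! (i - 1), ?s ! j))"
  have "det M = (\<Sum>j<card \<gamma>. (-1) ^ j * x j * d j)"
    unfolding M_def d_def using fin(2) card by (rule det_bordered_minor)
  also have "\<dots> = of_real (\<Sum>j<card \<gamma>. cmod (d j))"
    unfolding of_real_sum x_def
    by (intro sum.cong) (simp_all add: mult.assoc[symmetric] cnj_mult_self_div_cmod
        flip: power_mult_distrib)
  finally have "cmod (det M) = \<bar>\<Sum>j<card \<gamma>. cmod (d j)\<bar>"
    by (simp only: norm_of_real)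
  also have "\<dots> = (\<Sum>j<card \<gamma>. cmod (d j))"
    by (rule abs_of_nonneg) (simp add: sum_nonneg)
  also have "\<dots> = (\<Sum>a\<in>\<gamma>. cmod (minor B \<alpha> (\<gamma> - {a})))"
    unfolding d_def using fin
    by (intro sum.reindex_bij_betw bij_betw_nth) auto
  finally have det_M: "cmod (det M) = (\<Sum>a\<in>\<gamma>. cmod (minor B \<alpha> (\<gamma> - {a})))" .
  have "cmod (M $$ (i, j)) \<le> 1" if "i < card \<gamma>" "j < card \<gamma>" for i j
  proof (cases "i = 0")
    case True
    then show ?thesis
      using that by (simp add: M_def x_def norm_mult norm_power norm_divide)
  next
    case False
    have "?r ! (i - 1) \<in> \<alpha>" "?s ! j \<in> \<gamma>"
      using that False fin card nth_mem[of "i - 1" ?r] nth_mem[of j ?s] by auto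
    with False that \<alpha> \<gamma> show ?thesis
      by (auto simp: M_def intro!: entries)
  qed
  then have "(cmod (det M))\<^sup>2 \<le> real (card \<gamma>) ^ card \<gamma>"
    by (intro cmod_det_sq_le_if_entries_le_1) (auto simp: M_def)
  then show ?thesis
    by (simp only: det_M)
qed

lemma finite_ksubsets: "finite (ksubsets n k)"
  unfolding ksubsets_def by (rule finite_subset[of _ "Pow {0..<n}"]) auto

lemma card_ksubsets: "card (ksubsets n k) = n choose k"
  using n_subsets[of "{0..<n}" k] by (simp add: ksubsets_def)

text \<open>Double counting of the pairs \<open>\<beta> \<subset> \<gamma>\<close>: each \<open>k\<close>-subset \<open>\<beta>\<close> of \<open>{0..<n}\<close> arises
  as \<open>\<gamma> - {a}\<close> from exactly the \<open>n - k\<close> sets \<open>\<gamma> = insert a \<beta>\<close> with \<open>a \<notin> \<beta>\<close>.\<close>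

lemma sum_ksubsets_Suc_remove:
  fixes f :: "nat set \<Rightarrow> 'a :: comm_semiring_1"
  shows "(\<Sum>\<gamma>\<in>ksubsets n (Suc k). \<Sum>a\<in>\<gamma>. f (\<gamma> - {a})) = of_nat (n - k) * (\<Sum>\<beta>\<in>ksubsets n k. f \<beta>)"
proof -
  have fin: "finite \<gamma>" if "\<gamma> \<in> ksubsets n k'" for \<gamma> k'
    using that finite_subset by (auto simp: ksubsets_def)
  have "(\<Sum>\<gamma>\<in>ksubsets n (Suc k). \<Sum>a\<in>\<gamma>. f (\<gamma> - {a}))
      = (\<Sum>(\<gamma>, a)\<in>(SIGMA \<gamma>:ksubsets n (Suc k). \<gamma>). f (\<gamma> - {a}))"
    by (rule sum.Sigma) (auto simp: finite_ksubsets fin)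
  also have "\<dots> = (\<Sum>(\<beta>, a)\<in>(SIGMA \<beta>:ksubsets n k. {0..<n} - \<beta>). f \<beta>)"
    by (rule sum.reindex_bij_witness[where i = "\<lambda>(\<beta>, a). (insert a \<beta>, a)"
          and j = "\<lambda>(\<gamma>, a). (\<gamma> - {a}, a)"])
      (auto simp: ksubsets_def card_insert_if finite_subset card_Diff_singleton_if)
  also have "\<dots> = (\<Sum>\<beta>\<in>ksubsets n k. of_nat (card ({0..<n} - \<beta>)) * f \<beta>)"
    by (subst sum.Sigma[symmetric]) (auto simp: finite_ksubsets)
  also have "\<dots> = (\<Sum>\<beta>\<in>ksubsets n k. of_nat (n - k) * f \<beta>)"
    by (intro sum.cong) (auto simp: ksubsets_def card_Diff_subset finite_subset)
  finally show ?thesis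
    by (simp add: sum_distrib_left)
qed

lemma powr_half_power2:
  fixes x :: real
  assumes "0 < x"
  shows "(x powr (real m / 2))\<^sup>2 = x ^ m"
  using assms by (simp add: powr_power powr_realpow)

lemma compound_row_sum_le:
  fixes B :: "complex mat"
  assumes entries: "\<And>i j. i < dim_row B \<Longrightarrow> j < dim_col B \<Longrightarrow> cmod (B $$ (i, j)) \<le> 1"
    and \<alpha>: "\<alpha> \<in> ksubsets (dim_row B) k" and k: "k < dim_col B"
  shows "(\<Sum>\<beta>\<in>ksubsets (dim_col B) k. cmod (minor B \<alpha> \<beta>))
    \<le> real (dim_col B choose k) * (real k + 1) powr ((real k - 1) / 2)"
proof -
  let ?n = "dim_col B"
  let ?S = "\<Sum>\<beta>\<in>ksubsets ?n k. cmod (minor B \<alpha> \<beta>)"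
  let ?P = "(real k + 1) powr ((real k - 1) / 2)"
  have block: "(\<Sum>a\<in>\<gamma>. cmod (minor B \<alpha> (\<gamma> - {a}))) \<le> real (Suc k) powr (real (Suc k) / 2)"
    if "\<gamma> \<in> ksubsets ?n (Suc k)" for \<gamma>
  proof (rule power2_le_imp_le)
    show "(\<Sum>a\<in>\<gamma>. cmod (minor B \<alpha> (\<gamma> - {a})))\<^sup>2 \<le> (real (Suc k) powr (real (Suc k) / 2))\<^sup>2"
      using sum_cmod_minors_remove_le[OF entries, of \<alpha> \<gamma>] \<alpha> that
      by (simp add: ksubsets_def powr_half_power2 del: of_nat_Suc)
  qed simp
  have "real (?n - k) * ?S = (\<Sum>\<gamma>\<in>ksubsets ?n (Suc k). \<Sum>a\<in>\<gamma>. cmod (minor B \<alpha> (\<gamma> - {a})))"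
    by (rule sum_ksubsets_Suc_remove[symmetric])
  also have "\<dots> \<le> (\<Sum>\<gamma>\<in>ksubsets ?n (Suc k). real (Suc k) powr (real (Suc k) / 2))"
    by (rule sum_mono) (rule block)
  also have "\<dots> = real (?n choose Suc k) * real (Suc k) powr (real (Suc k) / 2)"
    by (simp add: card_ksubsets del: of_nat_Suc)
  also have "\<dots> = real (Suc k * (?n choose Suc k)) * ?P"
  proof -
    have "real (Suc k) / 2 = 1 + (real k - 1) / 2"
      by (simp add: field_simps)
    then show ?thesis
      by (simp only: powr_add of_nat_mult) (simp add: add.commute)
  qed
  also have "\<dots> = real ((?n - k) * (?n choose k)) * ?P"
    by (simp only: binomial_absorption binomial_absorb_comp)
  also have "\<dots> = real (?n - k) * (real (?n choose k) * ?P)"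
    by (simp add: mult.assoc)
  finally show ?thesis
    using k by simp
qed

lemma compound_inf_norm_le:
  fixes B :: "complex mat"
  assumes entries: "\<And>i j. i < dim_row B \<Longrightarrow> j < dim_col B \<Longrightarrow> cmod (B $$ (i, j)) \<le> 1"
    and "k \<le> dim_row B" and "k < dim_col B"
  shows "compound_inf_norm k B \<le> real (dim_col B choose k) * (real k + 1) powr ((real k - 1) / 2)"
  unfolding compound_inf_norm_def
proof (rule Max.boundedI)
  have "{0..<k} \<in> ksubsets (dim_row B) k"
    using assms by (simp add: ksubsets_def)
  then show "(\<lambda>\<alpha>. \<Sum>\<beta>\<in>ksubsets (dim_col B) k. cmod (minor B \<alpha> \<beta>)) ` ksubsets (dim_row B) k \<noteq> {}"
    by blast
qed (use assms compound_row_sum_le in \<open>auto simp: finite_ksubsets\<close>)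

lemma cmod_le_col_inf_norm: "i < dim_row B \<Longrightarrow> cmod (B $$ (i, j)) \<le> col_inf_norm B j"
  unfolding col_inf_norm_def by (rule Max_ge) auto

theorem theorem2p7:
  fixes B :: "complex mat" and n k :: nat
  assumes "0 < k" and "k < n"
    and "B \<in> carrier_mat n n"
    and "\<And>j. j < n \<Longrightarrow> col_inf_norm B j = 1"
  shows "compound_inf_norm k B \<le> real (n choose k) * (real k + 1) powr ((real k - 1) / 2)"
proof -
  have "cmod (B $$ (i, j)) \<le> 1" if "i < dim_row B" "j < dim_col B" for i j
    using cmod_le_col_inf_norm[of i B j] assms(3,4) that by simp
  with compound_inf_norm_le[of B k] assms(2,3) show ?thesis
    by simp
qed

end
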